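(* Let $M$ be a matroid of rank $r$ on a finite linearly ordered set $E$. Then $\mathcal A(M)$ is an antichain, and $\mathcal A(U)\cap\mathcal A(U')=\emptyset$ for all distinct $U,U'\in\mathcal U^*(M)$.
   Context: Graded lexicographic order on $2^E$: $X\prec Y$ if $|X|<|Y|$, or $|X|=|Y|$ and $\min(X\triangle Y)\in X$; $\min\mathcal X$ is the $\prec$-smallest member of a nonempty $\mathcal X$. $X$ is $k$-closed in $M$ if $\mathrm{cl}_M(Y)\subseteq X$ for all $Y\subseteq X$ with $|Y|\le k$; $\mathrm{cl}_k(X)$ is the intersection of all $k$-closed supersets of $X$ (so $\mathrm{cl}_{-1}(X)=X$). For a flat $F$ of rank $k$, $U^*_F=\min\{U:\mathrm{cl}_{k-1}(U)=F\}$; $\mathcal U^*_k=\{U^*_F: F\text{ a flat of rank }k,\ |U^*_F|>k\}$ for $0\le k\le r-1$, and $\mathcal U^*(M)=\bigcup_{k=0}^{r-1}\mathcal U^*_k$. For $U\in\mathcal U^*_k$ define $\mathcal A(U)=\binom{U}{r-1}$ if $k=r-1$; $\mathcal A(U)=\binom{U}{k}\setminus\{\min\binom{U}{k}\}$ if $0<k<r-1$; $\mathcal A(U)=\binom{U}{1}$ if $k=0$. Here $\binom{U}{j}$ is the set of $j$-subsets of $U$. Finally $\mathcal A(M)=\bigcup_{k=0}^{r-1}\bigcup_{U\in\mathcal U^*_k}\mathcal A(U)$. *)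

theory Defs
  imports Main
begin

definition matroid :: "'a set \<Rightarrow> ('a set \<Rightarrow> bool) \<Rightarrow> bool" where
  "matroid E indep \<longleftrightarrow>
     finite E \<and> indep {} \<and>
     (\<forall>X. indep X \<longrightarrow> X \<subseteq> E) \<and>
     (\<forall>X Y. indep Y \<and> X \<subseteq> Y \<longrightarrow> indep X) \<and>
     (\<forall>X Y. indep X \<and> indep Y \<and> card X < card Y \<longrightarrow> (\<exists>y\<in>Y - X. indep (insert y X)))"

definition mrank :: "('a set \<Rightarrow> bool) \<Rightarrow> 'a set \<Rightarrow> nat" where
  "mrank indep X = Max {card I | I. I \<subseteq> X \<and> indep I}"

definition mcl :: "'a set \<Rightarrow> ('a set \<Rightarrow> bool) \<Rightarrow> 'a set \<Rightarrow> 'a set" where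
  "mcl E indep X = {x \<in> E. mrank indep (insert x X) = mrank indep X}"

definition mflat :: "'a set \<Rightarrow> ('a set \<Rightarrow> bool) \<Rightarrow> 'a set \<Rightarrow> bool" where
  "mflat E indep F \<longleftrightarrow> F \<subseteq> E \<and> mcl E indep F = F"

text \<open>X is k-closed (k an integer, possibly -1).\<close>
definition kclosed :: "'a set \<Rightarrow> ('a set \<Rightarrow> bool) \<Rightarrow> int \<Rightarrow> 'a set \<Rightarrow> bool" where
  "kclosed E indep k X \<longleftrightarrow> X \<subseteq> E \<and> (\<forall>Y. Y \<subseteq> X \<and> int (card Y) \<le> k \<longrightarrow> mcl E indep Y \<subseteq> X)"

definition clk :: "'a set \<Rightarrow> ('a set \<Rightarrow> bool) \<Rightarrow> int \<Rightarrow> 'a set \<Rightarrow> 'a set" where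
  "clk E indep k X = \<Inter> {Z. kclosed E indep k Z \<and> X \<subseteq> Z}"

definition glex_less :: "'a::linorder set \<Rightarrow> 'a set \<Rightarrow> bool" where
  "glex_less X Y \<longleftrightarrow> card X < card Y \<or>
     (card X = card Y \<and> X \<noteq> Y \<and> Min ((X - Y) \<union> (Y - X)) \<in> X)"

definition glex_min :: "'a::linorder set set \<Rightarrow> 'a set" where
  "glex_min \<X> = (THE X. X \<in> \<X> \<and> (\<forall>Y\<in>\<X>. Y \<noteq> X \<longrightarrow> glex_less X Y))"

definition UstarF :: "'a::linorder set \<Rightarrow> ('a set \<Rightarrow> bool) \<Rightarrow> 'a set \<Rightarrow> 'a set" where
  "UstarF E indep F =
     glex_min {U. U \<subseteq> E \<and> clk E indep (int (mrank indep F) - 1) U = F}"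

text \<open>\<open>\<U>*_k\<close> (meaningful for k \<le> r - 1).\<close>
definition Ustar :: "'a::linorder set \<Rightarrow> ('a set \<Rightarrow> bool) \<Rightarrow> nat \<Rightarrow> 'a set set" where
  "Ustar E indep k = {UstarF E indep F | F.
     mflat E indep F \<and> mrank indep F = k \<and> card (UstarF E indep F) > k}"

definition binom :: "'a set \<Rightarrow> nat \<Rightarrow> 'a set set" where
  "binom U j = {S. S \<subseteq> U \<and> card S = j}"

definition Acal :: "nat \<Rightarrow> nat \<Rightarrow> 'a::linorder set \<Rightarrow> 'a set set" where
  "Acal r k U =
     (if k = r - 1 then binom U (r - 1)
      else if 0 < k \<and> k < r - 1 then binom U k - {glex_min (binom U k)}
      else binom U 1)"

definition AcalM :: "'a::linorder set \<Rightarrow> ('a set \<Rightarrow> bool) \<Rightarrow> 'a set set" where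
  "AcalM E indep = (\<Union>k\<in>{..<mrank indep E}. \<Union>U\<in>Ustar E indep k. Acal (mrank indep E) k U)"

definition antichain_sets :: "'a set set \<Rightarrow> bool" where
  "antichain_sets \<A> \<longleftrightarrow> (\<forall>X\<in>\<A>. \<forall>Y\<in>\<A>. X \<subseteq> Y \<longrightarrow> X = Y)"

end

theory Submission
  imports Defs
begin

text \<open>For \<open>U = U*_F\<close> with \<open>rank F = k\<close>, no element of \<open>U\<close> lies in the \<open>(k-1)\<close>-closure of the
  others, since removing it would give a smaller set with the same closure. Hence every subset of \<open>U\<close>
  of size at most \<open>k\<close> is independent, the members of \<open>\<A>(U)\<close> for \<open>k > 0\<close> are bases of \<open>F\<close>, and a
  common member of \<open>\<A>(U)\<close> and \<open>\<A>(U')\<close> forces \<open>F = F'\<close>. If \<open>Y \<in> \<A>(U)\<close> were properly contained in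
  \<open>Y' \<in> \<A>(U')\<close>, then \<open>Y \<subseteq> U' = U*_F'\<close> with \<open>rank F' > k\<close>, and \<open>Y\<close> is not the glex-least \<open>k\<close>-subset
  \<open>Y\<^sub>0\<close> of \<open>U\<close>. Both span \<open>F\<close>, so replacing \<open>Y\<close> by \<open>Y\<^sub>0\<close> in \<open>U'\<close> keeps its \<open>(rank F' - 1)\<close>-closure
  and yields a glex-smaller set, contradicting the choice of \<open>U*_F'\<close>.\<close>

section \<open>Graded lexicographic order\<close>

lemma glex_less_iff_first_difference:
  fixes X Y :: "'a::linorder set"
  assumes "finite X" "finite Y" "card X = card Y"
  shows "glex_less X Y \<longleftrightarrow> (\<exists>m. m \<in> X \<and> m \<notin> Y \<and> (\<forall>x<m. x \<in> X \<longleftrightarrow> x \<in> Y))"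
proof
  let ?D = "(X - Y) \<union> (Y - X)"
  have fin: "finite ?D" using assms by auto
  assume "glex_less X Y"
  then have ne: "?D \<noteq> {}" and mi: "Min ?D \<in> X" using assms(3) by (auto simp: glex_less_def)
  have "\<forall>x<Min ?D. x \<in> X \<longleftrightarrow> x \<in> Y"
    using Min_le[OF fin] by (metis DiffI UnI1 UnI2 leD)
  then show "\<exists>m. m \<in> X \<and> m \<notin> Y \<and> (\<forall>x<m. x \<in> X \<longleftrightarrow> x \<in> Y)"
    using Min_in[OF fin ne] mi by blast
next
  let ?D = "(X - Y) \<union> (Y - X)"
  assume "\<exists>m. m \<in> X \<and> m \<notin> Y \<and> (\<forall>x<m. x \<in> X \<longleftrightarrow> x \<in> Y)"
  then obtain m where m: "m \<in> X" "m \<notin> Y" "\<forall>x<m. x \<in> X \<longleftrightarrow> x \<in> Y" by blast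
  have "Min ?D = m"
    using assms m by (intro Min_eqI) (auto simp: not_less[symmetric])
  then show "glex_less X Y" using m assms(3) unfolding glex_less_def by auto
qed

lemma glex_less_asym:
  fixes X Y :: "'a::linorder set"
  assumes "finite X" "finite Y" "glex_less X Y"
  shows "\<not> glex_less Y X"
proof
  assume YX: "glex_less Y X"
  have c: "card X = card Y" using assms(3) YX unfolding glex_less_def by auto
  obtain m where "m \<in> X" "m \<notin> Y" "\<forall>x<m. x \<in> X \<longleftrightarrow> x \<in> Y"
    using glex_less_iff_first_difference[OF assms(1,2) c] assms(3) by blast
  moreover obtain n where "n \<in> Y" "n \<notin> X" "\<forall>x<n. x \<in> Y \<longleftrightarrow> x \<in> X"
    using glex_less_iff_first_difference[OF assms(2,1) c[symmetric]] YX by blast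
  ultimately show False
    by (cases m n rule: linorder_cases) auto
qed

lemma glex_less_trans:
  fixes X Y Z :: "'a::linorder set"
  assumes "finite X" "finite Y" "finite Z" "glex_less X Y" "glex_less Y Z"
  shows "glex_less X Z"
proof (cases "card X = card Y \<and> card Y = card Z")
  case False
  then show ?thesis using assms(4,5) unfolding glex_less_def by auto
next
  case True
  obtain a where a: "a \<in> X" "a \<notin> Y" "\<forall>x<a. x \<in> X \<longleftrightarrow> x \<in> Y"
    using glex_less_iff_first_difference[OF assms(1,2)] True assms(4) by blast
  obtain b where b: "b \<in> Y" "b \<notin> Z" "\<forall>x<b. x \<in> Y \<longleftrightarrow> x \<in> Z"
    using glex_less_iff_first_difference[OF assms(2,3)] True assms(5) by blast
  have "\<exists>m. m \<in> X \<and> m \<notin> Z \<and> (\<forall>x<m. x \<in> X \<longleftrightarrow> x \<in> Z)"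
  proof (cases a b rule: linorder_cases)
    case less
    then show ?thesis using a b by (intro exI[of _ a]) auto
  next
    case equal then show ?thesis using a b by auto
  next
    case greater
    then show ?thesis using a b by (intro exI[of _ b]) auto
  qed
  then show ?thesis using glex_less_iff_first_difference[OF assms(1,3)] True by simp
qed

lemma glex_less_total:
  fixes X Y :: "'a::linorder set"
  assumes "finite X" "finite Y" "X \<noteq> Y"
  shows "glex_less X Y \<or> glex_less Y X"
proof -
  have "Min ((X - Y) \<union> (Y - X)) \<in> (X - Y) \<union> (Y - X)"
    using assms by (intro Min_in) auto
  then show ?thesis using assms(3) by (auto simp: glex_less_def Un_commute)
qed

lemma ex_glex_least:
  fixes \<X> :: "'a::linorder set set"
  assumes "finite \<X>" "\<X> \<noteq> {}" "\<forall>X\<in>\<X>. finite X"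
  shows "\<exists>M\<in>\<X>. \<forall>Y\<in>\<X>. Y \<noteq> M \<longrightarrow> glex_less M Y"
  using assms
proof (induction \<X> rule: finite_ne_induct)
  case (singleton X)
  then show ?case by auto
next
  case (insert X \<F>)
  then obtain M where M: "M \<in> \<F>" "\<forall>Y\<in>\<F>. Y \<noteq> M \<longrightarrow> glex_less M Y" by auto
  show ?case
  proof (cases "glex_less X M")
    case True
    then have "\<forall>Y\<in>\<F>. glex_less X Y"
      using M insert.prems glex_less_trans[of X M] by (metis insert_iff)
    then show ?thesis by blast
  next
    case False
    then have "glex_less M X"
      using glex_less_total[of X M] M insert.hyps insert.prems by fastforce
    then show ?thesis using M by auto
  qed
qed

lemma glex_min_least:
  fixes \<X> :: "'a::linorder set set"
  assumes "finite \<X>" "\<X> \<noteq> {}" "\<forall>X\<in>\<X>. finite X"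
  shows "glex_min \<X> \<in> \<X>" "\<And>Y. Y \<in> \<X> \<Longrightarrow> Y \<noteq> glex_min \<X> \<Longrightarrow> glex_less (glex_min \<X>) Y"
proof -
  let ?P = "\<lambda>X. X \<in> \<X> \<and> (\<forall>Y\<in>\<X>. Y \<noteq> X \<longrightarrow> glex_less X Y)"
  have "\<exists>!X. ?P X"
  proof (rule ex_ex1I)
    show "\<exists>X. ?P X" using ex_glex_least[OF assms] by blast
  next
    fix X X' assume "?P X" "?P X'"
    then show "X = X'" using glex_less_asym assms(3) by metis
  qed
  then have "?P (glex_min \<X>)" unfolding glex_min_def by (rule theI')
  then show "glex_min \<X> \<in> \<X>" "\<And>Y. Y \<in> \<X> \<Longrightarrow> Y \<noteq> glex_min \<X> \<Longrightarrow> glex_less (glex_min \<X>) Y"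
    by auto
qed

lemma glex_min_minimal:
  fixes \<X> :: "'a::linorder set set"
  assumes "finite \<X>" "\<forall>X\<in>\<X>. finite X" "V \<in> \<X>"
  shows "\<not> glex_less V (glex_min \<X>)"
proof
  assume less: "glex_less V (glex_min \<X>)"
  have ne: "\<X> \<noteq> {}" using assms(3) by blast
  have "V \<noteq> glex_min \<X>"
    using less by (auto simp: glex_less_def)
  then have "glex_less (glex_min \<X>) V"
    using glex_min_least(2)[OF assms(1) ne assms(2,3)] by simp
  moreover have "finite V" "finite (glex_min \<X>)"
    using assms glex_min_least(1)[OF assms(1) ne assms(2)] by auto
  ultimately show False
    using glex_less_asym less by blast
qed

lemma glex_less_exchange:
  fixes U Y Y' :: "'a::linorder set"
  assumes "finite U" "finite Y'" "Y \<subseteq> U" "Y' \<inter> U \<subseteq> Y" "card Y' = card Y" "glex_less Y' Y"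
  shows "glex_less ((U - Y) \<union> Y') U"
proof -
  have finY: "finite Y" using assms(1,3) finite_subset by blast
  obtain m where m: "m \<in> Y'" "m \<notin> Y" "\<forall>x<m. x \<in> Y' \<longleftrightarrow> x \<in> Y"
    using glex_less_iff_first_difference[OF assms(2) finY assms(5)] assms(6) by blast
  have "card ((U - Y) \<union> Y') = card (U - Y) + card Y'"
    using assms(1,2,4) by (intro card_Un_disjoint) auto
  also have "\<dots> = card U"
    using assms(1,3,5) card_Diff_subset[OF finY] card_mono[of U Y] by simp
  finally have card_eq: "card ((U - Y) \<union> Y') = card U" .
  have "m \<in> (U - Y) \<union> Y'" "m \<notin> U"
    using m(1,2) assms(4) by blast+
  moreover have "\<forall>x<m. x \<in> (U - Y) \<union> Y' \<longleftrightarrow> x \<in> U"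
  proof (intro allI impI)
    fix x
    assume "x < m"
    then have "x \<in> Y' \<longleftrightarrow> x \<in> Y" using m(3) by blast
    then show "x \<in> (U - Y) \<union> Y' \<longleftrightarrow> x \<in> U" using assms(3) by blast
  qed
  moreover have "finite ((U - Y) \<union> Y')"
    using assms(1,2) by blast
  ultimately show ?thesis
    using glex_less_iff_first_difference[OF _ assms(1) card_eq] by blast
qed

lemma glex_min_binom:
  fixes U :: "'a::linorder set"
  assumes "finite U" "Y \<in> binom U k"
  shows "glex_min (binom U k) \<in> binom U k"
    "Y \<noteq> glex_min (binom U k) \<Longrightarrow> glex_less (glex_min (binom U k)) Y"
proof -
  have "binom U k \<subseteq> Pow U"
    unfolding binom_def by blast
  then have "finite (binom U k)"
    using assms(1) by (simp add: finite_subset)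
  moreover have "\<forall>X\<in>binom U k. finite X"
    using assms(1) by (auto simp: binom_def intro: finite_subset)
  moreover have "binom U k \<noteq> {}"
    using assms(2) by blast
  ultimately show "glex_min (binom U k) \<in> binom U k"
    "Y \<noteq> glex_min (binom U k) \<Longrightarrow> glex_less (glex_min (binom U k)) Y"
    using glex_min_least assms(2) by blast+
qed

section \<open>The \<open>k\<close>-closure\<close>

lemma kclosed_ground: "kclosed E indep k E"
  by (auto simp: kclosed_def mcl_def)

lemma clk_superset: "U \<subseteq> clk E indep k U"
  unfolding clk_def by auto

lemma clk_least: "kclosed E indep k Z \<Longrightarrow> U \<subseteq> Z \<Longrightarrow> clk E indep k U \<subseteq> Z"
  unfolding clk_def by auto

lemma mcl_subset_clk:
  assumes "Y \<subseteq> clk E indep k U" "int (card Y) \<le> k"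
  shows "mcl E indep Y \<subseteq> clk E indep k U"
  using assms unfolding clk_def kclosed_def by blast

lemma kclosed_clk: "U \<subseteq> E \<Longrightarrow> kclosed E indep k (clk E indep k U)"
  unfolding kclosed_def using clk_least[OF kclosed_ground, of U] mcl_subset_clk[of _ E indep k U]
  by auto

lemma clk_eqI:
  assumes "V \<subseteq> E" "W \<subseteq> E" "V \<subseteq> clk E indep k W" "W \<subseteq> clk E indep k V"
  shows "clk E indep k V = clk E indep k W"
  using clk_least[OF kclosed_clk[OF assms(1)] assms(4)] clk_least[OF kclosed_clk[OF assms(2)] assms(3)]
  by blast

lemma clk_exchange:
  assumes "U \<subseteq> E" "Y' \<subseteq> E" "Y \<subseteq> U" "Y' \<subseteq> mcl E indep Y" "Y \<subseteq> mcl E indep Y'"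
    "int (card Y) \<le> k" "int (card Y') \<le> k"
  shows "clk E indep k ((U - Y) \<union> Y') = clk E indep k U"
proof (rule clk_eqI)
  show "(U - Y) \<union> Y' \<subseteq> clk E indep k U"
    using clk_superset[of U] mcl_subset_clk[of Y E indep k U] assms(3,4,6) by blast
  show "U \<subseteq> clk E indep k ((U - Y) \<union> Y')"
    using clk_superset[of "(U - Y) \<union> Y'"] mcl_subset_clk[of Y' E indep k "(U - Y) \<union> Y'"] assms(5,7)
    by blast
qed (use assms in auto)

lemma clk_remove_redundant:
  assumes "U \<subseteq> E" "y \<in> clk E indep k (U - {y})"
  shows "clk E indep k (U - {y}) = clk E indep k U"
proof (rule clk_eqI)
  show "U - {y} \<subseteq> clk E indep k U"
    using clk_superset[of U] by blast
  show "U \<subseteq> clk E indep k (U - {y})"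
    using clk_superset[of "U - {y}"] assms(2) by blast
qed (use assms(1) in auto)

section \<open>Rank and closure in a matroid\<close>

context
  fixes E :: "'a set" and indep :: "'a set \<Rightarrow> bool"
  assumes M: "matroid E indep"
begin

lemma finite_ground: "finite E"
  using M by (simp add: matroid_def)

lemma indep_empty: "indep {}"
  using M by (simp add: matroid_def)

lemma indep_subset_ground: "indep X \<Longrightarrow> X \<subseteq> E"
  using M by (simp add: matroid_def)

lemma indep_subset: "indep Y \<Longrightarrow> X \<subseteq> Y \<Longrightarrow> indep X"
  using M unfolding matroid_def by blast

lemma indep_augment: "indep X \<Longrightarrow> indep Y \<Longrightarrow> card X < card Y \<Longrightarrow> \<exists>y\<in>Y - X. indep (insert y X)"
  using M unfolding matroid_def by blast

lemma indep_finite: "indep X \<Longrightarrow> finite X"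
  using indep_subset_ground finite_ground finite_subset by blast

lemma finite_indep_cards: "finite {card I | I. I \<subseteq> X \<and> indep I}"
proof -
  have "{card I | I. I \<subseteq> X \<and> indep I} \<subseteq> card ` Pow E"
    using indep_subset_ground by auto
  then show ?thesis using finite_ground finite_subset by blast
qed

lemma card_le_mrank: "I \<subseteq> X \<Longrightarrow> indep I \<Longrightarrow> card I \<le> mrank indep X"
  unfolding mrank_def by (rule Max_ge[OF finite_indep_cards]) auto

lemma ex_basis: "\<exists>I. I \<subseteq> X \<and> indep I \<and> card I = mrank indep X"
proof -
  have "{card I | I. I \<subseteq> X \<and> indep I} \<noteq> {}"
    using indep_empty by blast
  from Max_in[OF finite_indep_cards this] show ?thesis
    unfolding mrank_def by auto
qed

lemma mrank_mono: "X \<subseteq> Y \<Longrightarrow> mrank indep X \<le> mrank indep Y"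
proof -
  assume "X \<subseteq> Y"
  moreover obtain I where "I \<subseteq> X" "indep I" "card I = mrank indep X"
    using ex_basis by blast
  ultimately show ?thesis
    using card_le_mrank[of I Y] by auto
qed

lemma mrank_indep: "indep I \<Longrightarrow> mrank indep I = card I"
proof -
  assume I: "indep I"
  obtain J where "J \<subseteq> I" "card J = mrank indep I"
    using ex_basis by blast
  then show ?thesis
    using card_mono[OF indep_finite[OF I]] card_le_mrank[OF order_refl I] by (metis le_antisym)
qed

lemma ex_basis_extending:
  "indep I \<Longrightarrow> I \<subseteq> X \<Longrightarrow> \<exists>J. I \<subseteq> J \<and> J \<subseteq> X \<and> indep J \<and> card J = mrank indep X"
proof (induction "mrank indep X - card I" arbitrary: I rule: less_induct)
  case less
  have le: "card I \<le> mrank indep X"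
    using card_le_mrank less.prems by blast
  show ?case
  proof (cases "card I = mrank indep X")
    case True
    then show ?thesis using less.prems by blast
  next
    case False
    obtain B where B: "B \<subseteq> X" "indep B" "card B = mrank indep X"
      using ex_basis by blast
    moreover have "card I < card B"
      using B(3) le False by simp
    ultimately obtain y where y: "y \<in> B - I" "indep (insert y I)"
      using indep_augment less.prems(1) by blast
    have "card (insert y I) = Suc (card I)"
      using y indep_finite less.prems by simp
    then have shorter: "mrank indep X - card (insert y I) < mrank indep X - card I"
      using le False by simp
    have "insert y I \<subseteq> X"
      using y B(1) less.prems(2) by blast
    from less.hyps[OF shorter y(2) this] show ?thesis
      by blast
  qed
qed

lemma mrank_insert_dependent:
  assumes "I \<subseteq> X" "indep I" "card I = mrank indep X" "\<not> indep (insert x I)"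
  shows "mrank indep (insert x X) = mrank indep X"
proof (rule antisym)
  show "mrank indep X \<le> mrank indep (insert x X)" by (rule mrank_mono) auto
  show "mrank indep (insert x X) \<le> mrank indep X"
  proof (rule ccontr)
    obtain J where J: "J \<subseteq> insert x X" "indep J" "card J = mrank indep (insert x X)"
      using ex_basis by blast
    assume "\<not> mrank indep (insert x X) \<le> mrank indep X"
    then obtain y where y: "y \<in> J - I" "indep (insert y I)"
      using indep_augment assms(2,3) J by (metis not_le)
    then have "insert y I \<subseteq> X"
      using assms(1,4) J(1) by auto
    then have "card (insert y I) \<le> mrank indep X"
      using card_le_mrank y(2) by blast
    then show False
      using y assms(3) indep_finite[OF assms(2)] by simp
  qed
qed

lemma mcl_mono:
  assumes "Y \<subseteq> X"
  shows "mcl E indep Y \<subseteq> mcl E indep X"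
proof
  fix x
  assume x: "x \<in> mcl E indep Y"
  then have xE: "x \<in> E" and rank_eq: "mrank indep (insert x Y) = mrank indep Y"
    by (auto simp: mcl_def)
  obtain I where I: "I \<subseteq> Y" "indep I" "card I = mrank indep Y"
    using ex_basis by blast
  have "I \<subseteq> X" using I(1) assms by blast
  from ex_basis_extending[OF I(2) this] obtain J
    where J: "I \<subseteq> J" "J \<subseteq> X" "indep J" "card J = mrank indep X"
    by blast
  show "x \<in> mcl E indep X"
  proof (cases "x \<in> J")
    case True
    then have "insert x X = X" using J(2) by blast
    then show ?thesis using xE by (simp add: mcl_def)
  next
    case False
    then have "x \<notin> I"
      using J(1) by blast
    have "\<not> indep (insert x I)"
    proof
      assume "indep (insert x I)"
      moreover have "insert x I \<subseteq> insert x Y" using I(1) by blast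
      ultimately have "card (insert x I) \<le> mrank indep (insert x Y)"
        using card_le_mrank by blast
      then show False
        using rank_eq I(3) \<open>x \<notin> I\<close> indep_finite[OF I(2)] by simp
    qed
    moreover have "insert x I \<subseteq> insert x J" using J(1) by blast
    ultimately have "\<not> indep (insert x J)"
      using indep_subset by blast
    then have "mrank indep (insert x X) = mrank indep X"
      by (rule mrank_insert_dependent[OF J(2-4)])
    then show ?thesis using xE by (simp add: mcl_def)
  qed
qed

lemma mflat_kclosed: "mflat E indep F \<Longrightarrow> kclosed E indep k F"
  unfolding kclosed_def mflat_def using mcl_mono by blast

lemma mcl_basis_of_flat:
  assumes F: "mflat E indep F" and Y: "Y \<subseteq> F" "indep Y" "card Y = mrank indep F"
  shows "mcl E indep Y = F"
proof
  show "mcl E indep Y \<subseteq> F"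
    using mcl_mono[OF Y(1)] F by (simp add: mflat_def)
  show "F \<subseteq> mcl E indep Y"
  proof
    fix x
    assume x: "x \<in> F"
    have "mrank indep (insert x Y) \<le> mrank indep F"
      using x Y by (intro mrank_mono) auto
    moreover have "mrank indep Y \<le> mrank indep (insert x Y)"
      by (rule mrank_mono) auto
    ultimately show "x \<in> mcl E indep Y"
      using x F Y mrank_indep by (auto simp: mcl_def mflat_def)
  qed
qed

lemma dependent_imp_mem_mcl_remove:
  assumes "Y \<subseteq> E" "\<not> indep Y"
  shows "\<exists>y\<in>Y. y \<in> mcl E indep (Y - {y})"
proof -
  obtain I where I: "I \<subseteq> Y" "indep I" "card I = mrank indep Y"
    using ex_basis by blast
  moreover have "I \<noteq> Y"
    using I(2) assms(2) by blast
  ultimately obtain y where y: "y \<in> Y" "y \<notin> I"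
    by blast
  have "card I \<le> mrank indep (Y - {y})"
    using I y by (intro card_le_mrank) auto
  moreover have "mrank indep (Y - {y}) \<le> mrank indep Y"
    by (rule mrank_mono) auto
  ultimately have "mrank indep (insert y (Y - {y})) = mrank indep (Y - {y})"
    using I y by (simp add: insert_absorb)
  then show ?thesis
    using y assms(1) by (auto simp: mcl_def)
qed

lemma mflat_rank0_eq_mcl_empty:
  assumes "mflat E indep F" "mrank indep F = 0"
  shows "F = mcl E indep {}"
  using mcl_basis_of_flat[OF assms(1)] assms(2) indep_empty by simp

lemma indep_subset_rank0_empty:
  assumes "indep Y" "Y \<subseteq> F" "mrank indep F = 0"
  shows "Y = {}"
  using card_le_mrank[OF assms(2,1)] assms(3) indep_finite[OF assms(1)] by simp

end

section \<open>The sets \<open>U*_F\<close> and \<open>\<A>(U)\<close>\<close>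

lemma Acal_memberD:
  assumes "k < r" "Y \<in> Acal r k U"
  shows "Y \<subseteq> U" "card Y = (if k = 0 \<and> r \<noteq> 1 then 1 else k)"
    "0 < k \<Longrightarrow> k < r - 1 \<Longrightarrow> Y \<noteq> glex_min (binom U k)"
  using assms unfolding Acal_def binom_def by (auto split: if_splits)

context
  fixes E :: "'a::linorder set" and indep :: "'a set \<Rightarrow> bool"
  assumes M: "matroid E indep"
begin

lemma UstarF_candidates:
  assumes "mflat E indep F"
  defines "\<X> \<equiv> {U. U \<subseteq> E \<and> clk E indep (int (mrank indep F) - 1) U = F}"
  shows "finite \<X>" "\<forall>X\<in>\<X>. finite X" "F \<in> \<X>"
proof -
  have "\<X> \<subseteq> Pow E"
    unfolding \<X>_def by blast
  then show "finite \<X>"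
    using finite_ground[OF M] by (meson finite_Pow_iff finite_subset)
  then show "\<forall>X\<in>\<X>. finite X"
    using \<open>\<X> \<subseteq> Pow E\<close> finite_ground[OF M] by (meson PowD finite_subset subsetD)
  have "clk E indep (int (mrank indep F) - 1) F \<subseteq> F"
    using clk_least[OF mflat_kclosed[OF M assms(1)] order_refl] .
  then have "clk E indep (int (mrank indep F) - 1) F = F"
    using clk_superset[of F] by (rule antisym)
  then show "F \<in> \<X>"
    unfolding \<X>_def using assms(1) by (simp add: mflat_def)
qed

lemma UstarF_spans:
  assumes "mflat E indep F"
  shows "UstarF E indep F \<subseteq> E" "clk E indep (int (mrank indep F) - 1) (UstarF E indep F) = F"
proof -
  note cand = UstarF_candidates[OF assms]
  have "UstarF E indep F \<in> {U. U \<subseteq> E \<and> clk E indep (int (mrank indep F) - 1) U = F}"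
    unfolding UstarF_def using glex_min_least(1)[OF cand(1) _ cand(2)] cand(3) by blast
  then show "UstarF E indep F \<subseteq> E" "clk E indep (int (mrank indep F) - 1) (UstarF E indep F) = F"
    by simp_all
qed

lemma UstarF_minimal:
  assumes "mflat E indep F" "V \<subseteq> E" "clk E indep (int (mrank indep F) - 1) V = F"
  shows "\<not> glex_less V (UstarF E indep F)"
  unfolding UstarF_def using glex_min_minimal[OF UstarF_candidates(1,2)[OF assms(1)]] assms(2,3)
  by simp

lemma UstarF_subset_flat:
  assumes "mflat E indep F"
  shows "UstarF E indep F \<subseteq> F"
  using clk_superset[of "UstarF E indep F" E indep "int (mrank indep F) - 1"] UstarF_spans(2)[OF assms]
  by simp

lemma UstarF_irredundant:
  assumes "mflat E indep F" "y \<in> UstarF E indep F"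
  shows "y \<notin> clk E indep (int (mrank indep F) - 1) (UstarF E indep F - {y})"
proof
  let ?K = "int (mrank indep F) - 1" and ?U = "UstarF E indep F"
  assume "y \<in> clk E indep ?K (?U - {y})"
  then have "clk E indep ?K (?U - {y}) = F"
    using clk_remove_redundant[OF UstarF_spans(1)[OF assms(1)]] UstarF_spans(2)[OF assms(1)] by simp
  moreover have "?U - {y} \<subseteq> E"
    using UstarF_spans(1)[OF assms(1)] by blast
  moreover have "finite ?U"
    using UstarF_spans(1)[OF assms(1)] finite_ground[OF M] finite_subset by blast
  then have "card (?U - {y}) < card ?U"
    using assms(2) by (rule card_Diff1_less)
  then have "glex_less (?U - {y}) ?U"
    by (simp add: glex_less_def)
  ultimately show False
    using UstarF_minimal[OF assms(1)] by blast
qed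

lemma UstarF_small_subset_indep:
  assumes "mflat E indep F" "Y \<subseteq> UstarF E indep F" "card Y \<le> mrank indep F"
  shows "indep Y"
proof (rule ccontr)
  let ?K = "int (mrank indep F) - 1" and ?U = "UstarF E indep F"
  assume "\<not> indep Y"
  moreover have YE: "Y \<subseteq> E"
    using assms(2) UstarF_spans(1)[OF assms(1)] by blast
  ultimately obtain y where y: "y \<in> Y" "y \<in> mcl E indep (Y - {y})"
    using dependent_imp_mem_mcl_remove[OF M] by blast
  have "finite Y"
    using YE finite_ground[OF M] finite_subset by blast
  then have "card (Y - {y}) < card Y"
    using y(1) by (rule card_Diff1_less)
  then have "int (card (Y - {y})) \<le> ?K"
    using assms(3) by linarith
  moreover have "Y - {y} \<subseteq> clk E indep ?K (?U - {y})"
    using clk_superset[of "?U - {y}" E indep ?K] assms(2) by blast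
  ultimately have "mcl E indep (Y - {y}) \<subseteq> clk E indep ?K (?U - {y})"
    by (intro mcl_subset_clk)
  then have "y \<in> clk E indep ?K (?U - {y})"
    using y(2) by blast
  then show False
    using UstarF_irredundant[OF assms(1)] y(1) assms(2) by blast
qed

lemma UstarF_inter_mcl_subset:
  assumes "mflat E indep F" "Y \<subseteq> UstarF E indep F" "card Y < mrank indep F"
  shows "UstarF E indep F \<inter> mcl E indep Y \<subseteq> Y"
proof
  let ?K = "int (mrank indep F) - 1" and ?U = "UstarF E indep F"
  fix e
  assume e: "e \<in> ?U \<inter> mcl E indep Y"
  show "e \<in> Y"
  proof (rule ccontr)
    assume "e \<notin> Y"
    then have "Y \<subseteq> clk E indep ?K (?U - {e})"
      using clk_superset[of "?U - {e}" E indep ?K] assms(2) by blast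
    moreover have "int (card Y) \<le> ?K"
      using assms(3) by linarith
    ultimately have "mcl E indep Y \<subseteq> clk E indep ?K (?U - {e})"
      by (rule mcl_subset_clk)
    then show False
      using UstarF_irredundant[OF assms(1)] e by blast
  qed
qed

lemma UstarF_subset_glex_minimal:
  assumes "mflat E indep F'" "Y \<subseteq> UstarF E indep F'" "card Y < mrank indep F'"
    "Y' \<subseteq> E" "Y' \<subseteq> mcl E indep Y" "Y \<subseteq> mcl E indep Y'" "card Y' = card Y"
  shows "\<not> glex_less Y' Y"
proof
  let ?K = "int (mrank indep F') - 1" and ?U = "UstarF E indep F'"
  assume less: "glex_less Y' Y"
  have UE: "?U \<subseteq> E"
    using UstarF_spans(1)[OF assms(1)] .
  have fin: "finite ?U" "finite Y'"
    using UE assms(4) finite_ground[OF M] finite_subset by blast+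
  have "Y' \<inter> ?U \<subseteq> Y"
    using UstarF_inter_mcl_subset[OF assms(1-3)] assms(5) by blast
  then have "glex_less ((?U - Y) \<union> Y') ?U"
    using glex_less_exchange[OF fin assms(2)] assms(7) less by blast
  moreover have "clk E indep ?K ((?U - Y) \<union> Y') = F'"
    using clk_exchange[OF UE assms(4,2,5,6)] assms(3,7) UstarF_spans(2)[OF assms(1)] by simp
  moreover have "(?U - Y) \<union> Y' \<subseteq> E"
    using UE assms(4) by blast
  ultimately show False
    using UstarF_minimal[OF assms(1)] by blast
qed

lemma UstarE:
  assumes "U \<in> Ustar E indep k"
  obtains F where "mflat E indep F" "mrank indep F = k" "U = UstarF E indep F"
  using assms unfolding Ustar_def by blast

lemma Acal_spanning:
  assumes "mflat E indep F" "mrank indep F = k" "0 < k" "k < mrank indep E"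
    "Y \<in> Acal (mrank indep E) k (UstarF E indep F)"
  shows "indep Y" "card Y = k" "mcl E indep Y = F"
proof -
  note Y = Acal_memberD[OF assms(4,5)]
  show "card Y = k"
    using Y(2) assms(3) by simp
  then show "indep Y"
    using UstarF_small_subset_indep[OF assms(1) Y(1)] assms(2) by simp
  then show "mcl E indep Y = F"
    using mcl_basis_of_flat[OF M assms(1)] Y(1) UstarF_subset_flat[OF assms(1)] assms(2)
      \<open>card Y = k\<close> by blast
qed

lemma Acal_rank0_not_subset_Acal_positive:
  assumes "k' < mrank indep E" "0 < k'"
    "mflat E indep F" "mrank indep F = 0" "mflat E indep F'" "mrank indep F' = k'"
    "Y \<in> Acal (mrank indep E) 0 (UstarF E indep F)" "Y' \<in> Acal (mrank indep E) k' (UstarF E indep F')"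
    "Y \<subseteq> Y'"
  shows False
proof -
  have "indep Y"
    using Acal_spanning(1)[OF assms(5,6,2,1,8)] indep_subset[OF M] assms(9) by blast
  moreover have "Y \<subseteq> F"
    using Acal_memberD(1)[OF _ assms(7)] UstarF_subset_flat[OF assms(3)] assms(1) by auto
  ultimately have "Y = {}"
    using indep_subset_rank0_empty[OF M] assms(4) by blast
  moreover have "card Y = 1"
    using Acal_memberD(2)[OF _ assms(7)] assms(1,2) by auto
  ultimately show False
    by simp
qed

lemma Acal_common_member_eq:
  assumes "k < mrank indep E" "k' < mrank indep E" "U \<in> Ustar E indep k" "U' \<in> Ustar E indep k'"
    "Y \<in> Acal (mrank indep E) k U" "Y \<in> Acal (mrank indep E) k' U'"
  shows "U = U'"
proof -
  obtain F where F: "mflat E indep F" "mrank indep F = k" "U = UstarF E indep F"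
    using assms(3) by (rule UstarE)
  obtain F' where F': "mflat E indep F'" "mrank indep F' = k'" "U' = UstarF E indep F'"
    using assms(4) by (rule UstarE)
  have "F = F'"
  proof (cases "k = 0"; cases "k' = 0")
    assume "k = 0" "k' = 0"
    then show "F = F'"
      using mflat_rank0_eq_mcl_empty[OF M F(1)] mflat_rank0_eq_mcl_empty[OF M F'(1)] F(2) F'(2) by simp
  next
    assume "k = 0" "k' \<noteq> 0"
    then show "F = F'"
      using Acal_rank0_not_subset_Acal_positive[OF assms(2) _ F(1) _ F'(1,2)] F F' assms(5,6) by auto
  next
    assume "k \<noteq> 0" "k' = 0"
    then show "F = F'"
      using Acal_rank0_not_subset_Acal_positive[OF assms(1) _ F'(1) _ F(1,2)] F F' assms(5,6) by auto
  next
    assume "k \<noteq> 0" "k' \<noteq> 0"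
    then show "F = F'"
      using Acal_spanning(3)[OF F(1,2) _ assms(1)] Acal_spanning(3)[OF F'(1,2) _ assms(2)] F F' assms(5,6)
      by auto
  qed
  then show "U = U'"
    using F(3) F'(3) by simp
qed

lemma Acal_positive_not_subset_UstarF:
  assumes "0 < k" "k < k'" "k' < mrank indep E"
    "mflat E indep F" "mrank indep F = k" "mflat E indep F'" "mrank indep F' = k'"
    "Y \<in> Acal (mrank indep E) k (UstarF E indep F)" "Y \<subseteq> UstarF E indep F'"
  shows False
proof -
  let ?U = "UstarF E indep F"
  let ?Y0 = "glex_min (binom ?U k)"
  have "k < mrank indep E"
    using assms(2,3) by simp
  note Y = Acal_memberD[OF this assms(8)] and Y_basis = Acal_spanning[OF assms(4,5,1) this assms(8)]
  have UE: "?U \<subseteq> E" and UF: "?U \<subseteq> F"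
    using UstarF_spans(1)[OF assms(4)] UstarF_subset_flat[OF assms(4)] by auto
  have "finite ?U"
    using UE finite_ground[OF M] by (rule finite_subset)
  have "Y \<in> binom ?U k"
    using Y(1) Y_basis(2) by (simp add: binom_def)
  note Y0_binom = glex_min_binom[OF \<open>finite ?U\<close> this]
  have Y0: "?Y0 \<subseteq> ?U" "card ?Y0 = k" "glex_less ?Y0 Y"
    using Y0_binom Y(3) assms(1-3) by (simp_all add: binom_def)
  have "mcl E indep ?Y0 = F"
    using UstarF_small_subset_indep[OF assms(4)] mcl_basis_of_flat[OF M assms(4)] Y0(1,2) UF assms(5)
    by auto
  have "\<not> glex_less ?Y0 Y"
  proof (rule UstarF_subset_glex_minimal[OF assms(6,9)])
    show "card Y < mrank indep F'"
      using Y_basis(2) assms(2,7) by simp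
    show "?Y0 \<subseteq> E" "?Y0 \<subseteq> mcl E indep Y" "Y \<subseteq> mcl E indep ?Y0" "card ?Y0 = card Y"
      using Y0(1,2) Y(1) UE UF Y_basis(2,3) \<open>mcl E indep ?Y0 = F\<close> by auto
  qed
  then show False
    using Y0(3) by blast
qed

lemma Acal_subset_eq:
  assumes "k < mrank indep E" "k' < mrank indep E" "U \<in> Ustar E indep k" "U' \<in> Ustar E indep k'"
    "Y \<in> Acal (mrank indep E) k U" "Y' \<in> Acal (mrank indep E) k' U'" "Y \<subseteq> Y'"
  shows "Y = Y'"
proof (rule ccontr)
  assume "Y \<noteq> Y'"
  obtain F where F: "mflat E indep F" "mrank indep F = k" "U = UstarF E indep F"
    using assms(3) by (rule UstarE)
  obtain F' where F': "mflat E indep F'" "mrank indep F' = k'" "U' = UstarF E indep F'"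
    using assms(4) by (rule UstarE)
  note Y = Acal_memberD[OF assms(1,5)] and Y' = Acal_memberD[OF assms(2,6)]
  have "Y' \<subseteq> E"
    using Y'(1) F'(3) UstarF_spans(1)[OF F'(1)] by auto
  then have "finite Y'"
    using finite_ground[OF M] by (rule finite_subset)
  then have "card Y < card Y'"
    using assms(7) \<open>Y \<noteq> Y'\<close> by (simp add: psubset_card_mono)
  then have "k' \<noteq> 0" and "k \<noteq> 0 \<Longrightarrow> k < k'"
    using Y(2) Y'(2) by (auto split: if_splits)
  show False
  proof (cases "k = 0")
    case True
    then show False
      using Acal_rank0_not_subset_Acal_positive[OF assms(2) _ F(1) _ F'(1,2)] F F' assms(5-7) \<open>k' \<noteq> 0\<close>
      by auto
  next
    case False
    then show False
      using Acal_positive_not_subset_UstarF[OF _ _ assms(2) F(1,2) F'(1,2)] \<open>k \<noteq> 0 \<Longrightarrow> k < k'\<close>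
        F(3) F'(3) assms(5,7) Y'(1) by blast
  qed
qed

end

theorem lemma5p4:
  fixes E :: "'a::linorder set" and indep :: "'a set \<Rightarrow> bool"
  assumes "matroid E indep"
  shows "antichain_sets (AcalM E indep) \<and>
    (\<forall>k k' U U'. k < mrank indep E \<longrightarrow> k' < mrank indep E \<longrightarrow>
        U \<in> Ustar E indep k \<longrightarrow> U' \<in> Ustar E indep k' \<longrightarrow> U \<noteq> U' \<longrightarrow>
        Acal (mrank indep E) k U \<inter> Acal (mrank indep E) k' U' = {})"
proof
  show "antichain_sets (AcalM E indep)"
    unfolding antichain_sets_def AcalM_def
  proof (intro ballI impI)
    fix Y Y'
    assume "Y \<in> (\<Union>k\<in>{..<mrank indep E}. \<Union>U\<in>Ustar E indep k. Acal (mrank indep E) k U)"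
      and "Y' \<in> (\<Union>k\<in>{..<mrank indep E}. \<Union>U\<in>Ustar E indep k. Acal (mrank indep E) k U)"
      and "Y \<subseteq> Y'"
    then show "Y = Y'"
      using Acal_subset_eq[OF assms] by blast
  qed
  show "\<forall>k k' U U'. k < mrank indep E \<longrightarrow> k' < mrank indep E \<longrightarrow>
        U \<in> Ustar E indep k \<longrightarrow> U' \<in> Ustar E indep k' \<longrightarrow> U \<noteq> U' \<longrightarrow>
        Acal (mrank indep E) k U \<inter> Acal (mrank indep E) k' U' = {}"
    using Acal_common_member_eq[OF assms] by blast
qed

end
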